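(* For every $\alpha>0$, $$\psi(\alpha)\;<\;\psi(2\alpha)-\ln 2\;<\;c_2(\alpha)\;<\;\psi(2\alpha),$$ where $c_2(\alpha)=2\int_0^\infty \ln(z)\,G_\alpha(z)\,g_\alpha(z)\,dz$.
   Context: $\psi=\Gamma'/\Gamma$ denotes the digamma function. For $\alpha>0$, $G_\alpha$ and $g_\alpha$ denote the distribution function and the density of the gamma distribution with shape $\alpha$ and scale $1$, i.e. $g_\alpha(z)=z^{\alpha-1}e^{-z}/\Gamma(\alpha)$, $z>0$. *)

theory Defs
  imports "HOL-Analysis.Analysis"
begin

definition gamma_dens :: "real \<Rightarrow> real \<Rightarrow> real" where
  "gamma_dens \<alpha> z = (if z > 0 then z powr (\<alpha> - 1) * exp (- z) / Gamma \<alpha> else 0)"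

definition gamma_cdf :: "real \<Rightarrow> real \<Rightarrow> real" where
  "gamma_cdf \<alpha> z = (LINT t:{..z}|lborel. gamma_dens \<alpha> t)"

definition c2 :: "real \<Rightarrow> real" where
  "c2 \<alpha> = 2 * (LINT z:{0<..}|lborel. ln z * gamma_cdf \<alpha> z * gamma_dens \<alpha> z)"

end

theory Submission
  imports Defs
begin

text \<open>
  Differentiating the logarithm of Legendre's duplication formula gives
  \<open>\<psi>(\<alpha>) + \<psi>(\<alpha> + 1/2) = 2 \<psi>(2\<alpha>) - 2 ln 2\<close>, so the first inequality is the strict
  monotonicity of \<open>\<psi>\<close>.

  For the others let \<open>X, Y\<close> be independent with density \<open>g\<^sub>\<alpha>\<close>. By Fubini and symmetry,
  \<open>c\<^sub>2(\<alpha>) = E ln (max X Y)\<close>. Differentiating \<open>\<Gamma>(\<gamma>) = \<integral> t^(\<gamma>-1) e^(-t) dt\<close> in \<open>\<gamma>\<close> shows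
  \<open>E ln Z = \<psi>(\<gamma>)\<close> for \<open>Z\<close> with density \<open>g\<^sub>\<gamma>\<close>, and \<open>X + Y\<close> has density \<open>g\<^sub>2\<^sub>\<alpha>\<close> (a Beta integral),
  so \<open>E ln (X + Y) = \<psi>(2\<alpha>)\<close>. Now integrate \<open>max X Y < X + Y \<le> 2 max X Y\<close>; both inequalities
  are strict on a set of positive measure.
\<close>

lemma Gamma_legendre_duplication_real:
  fixes x :: real
  assumes "x > 0"
  shows "Gamma x * Gamma (x + 1/2) = exp ((1 - 2*x) * ln 2) * sqrt pi * Gamma (2*x)"
proof -
  have "complex_of_real x \<notin> \<int>\<^sub>\<le>\<^sub>0" "complex_of_real x + 1/2 \<notin> \<int>\<^sub>\<le>\<^sub>0"
    using assms nonpos_Ints_subset_nonpos_Reals by (auto simp: complex_nonpos_Reals_iff)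
  from Gamma_legendre_duplication[OF this]
  have "complex_of_real (Gamma x * Gamma (x + 1/2)) =
        complex_of_real (exp ((1 - 2*x) * ln 2) * sqrt pi * Gamma (2*x))"
    by (simp add: Gamma_complex_of_real[symmetric] exp_of_real[symmetric])
  thus ?thesis by (simp only: of_real_eq_iff)
qed

lemma Digamma_legendre_duplication_real:
  fixes x :: real
  assumes "x > 0"
  shows "Digamma x + Digamma (x + 1/2) = 2 * Digamma (2*x) - 2 * ln 2"
proof -
  define f where "f = (\<lambda>y::real. ln_Gamma y + ln_Gamma (y + 1/2))"
  define h where "h = (\<lambda>y::real. (1 - 2*y) * ln 2 + ln (sqrt pi) + ln_Gamma (2*y))"
  have f_eq_h: "f y = h y" if "y > 0" for y
  proof -
    have "ln (Gamma y * Gamma (y + 1/2)) = ln (exp ((1 - 2*y) * ln 2) * sqrt pi * Gamma (2*y))"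
      using Gamma_legendre_duplication_real[OF that] by simp
    with that show ?thesis
      by (simp add: f_def h_def ln_mult ln_Gamma_real_pos less_imp_neq[OF Gamma_real_pos, symmetric])
  qed
  have "(f has_field_derivative Digamma x + Digamma (x + 1/2)) (at x)"
    unfolding f_def using assms by (auto intro!: derivative_eq_intros)
  hence "(h has_field_derivative Digamma x + Digamma (x + 1/2)) (at x)"
    by (rule has_field_derivative_transform_within_open[where S="{0<..}"]) (use assms f_eq_h in auto)
  moreover have "(h has_field_derivative -2 * ln 2 + 2 * Digamma (2*x)) (at x)"
    unfolding h_def using assms by (auto intro!: derivative_eq_intros)
  ultimately show ?thesis by (metis DERIV_unique add.commute diff_conv_add_uminus mult_minus_left)
qed

lemma Digamma_less_Digamma_double_minus_ln2:
  fixes x :: real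
  assumes "x > 0"
  shows "Digamma x < Digamma (2 * x) - ln 2"
  using Digamma_legendre_duplication_real[OF assms] Digamma_real_strict_mono[OF assms, of "x + 1/2"]
  by simp

lemma integral_dominated_convergence_at:
  fixes s :: "'b::first_countable_topology \<Rightarrow> 'a \<Rightarrow> 'c::{banach, second_countable_topology}"
  assumes "f \<in> borel_measurable M" "\<And>h. s h \<in> borel_measurable M" "integrable M w"
    and lim: "AE x in M. ((\<lambda>h. s h x) \<longlongrightarrow> f x) (at a within S)"
    and bound: "\<forall>\<^sub>F h in at a within S. AE x in M. norm (s h x) \<le> w x"
  shows "((\<lambda>h. integral\<^sup>L M (s h)) \<longlongrightarrow> integral\<^sup>L M f) (at a within S)"
proof (clarsimp simp: tendsto_at_iff_sequentially comp_def)
  fix X :: "nat \<Rightarrow> 'b" assume "\<forall>i. X i \<in> S \<and> X i \<noteq> a" and "X \<longlonglongrightarrow> a"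
  hence X: "filterlim X (at a within S) sequentially"
    by (auto simp: filterlim_at)
  from filterlim_iff[THEN iffD1, OF X, rule_format, OF bound]
  obtain N where w: "\<And>n. N \<le> n \<Longrightarrow> AE x in M. norm (s (X n) x) \<le> w x"
    by (auto simp: eventually_sequentially)
  show "(\<lambda>n. integral\<^sup>L M (s (X n))) \<longlonglongrightarrow> integral\<^sup>L M f"
  proof (rule LIMSEQ_offset, rule integral_dominated_convergence)
    show "AE x in M. norm (s (X (n + N)) x) \<le> w x" for n
      by (rule w) auto
    show "AE x in M. (\<lambda>n. s (X (n + N)) x) \<longlonglongrightarrow> f x"
      using lim
      by eventually_elim (intro LIMSEQ_ignore_initial_segment filterlim_compose[OF _ X])
  qed (use assms in auto)
qed

definition Gamma_integrand :: "real \<Rightarrow> real \<Rightarrow> real" where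
  "Gamma_integrand \<gamma> t = (if t > 0 then t powr (\<gamma> - 1) * exp (- t) else 0)"

lemma Gamma_integrand_measurable [measurable]: "Gamma_integrand \<gamma> \<in> borel_measurable borel"
  unfolding Gamma_integrand_def by measurable

lemma Gamma_integrand_nonneg: "Gamma_integrand \<gamma> t \<ge> 0"
  by (simp add: Gamma_integrand_def)

lemma has_bochner_integral_Gamma_integrand:
  assumes "\<gamma> > 0"
  shows "has_bochner_integral lborel (Gamma_integrand \<gamma>) (Gamma \<gamma>)"
proof -
  have "ennreal (indicator {0..} t * t powr (\<gamma> - 1) / exp t) = ennreal (Gamma_integrand \<gamma> t)" for t
    by (cases "t > 0"; cases "t = 0") (auto simp: Gamma_integrand_def exp_minus field_simps)
  thus ?thesis
    using Gamma_conv_nn_integral_real[OF assms] assms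
    by (intro has_bochner_integral_nn_integral) (auto simp: Gamma_integrand_nonneg less_imp_le)
qed

lemma integrable_Gamma_integrand: "\<gamma> > 0 \<Longrightarrow> integrable lborel (Gamma_integrand \<gamma>)"
  using has_bochner_integral_Gamma_integrand by (auto simp: has_bochner_integral_iff)

lemma integral_Gamma_integrand: "\<gamma> > 0 \<Longrightarrow> integral\<^sup>L lborel (Gamma_integrand \<gamma>) = Gamma \<gamma>"
  using has_bochner_integral_Gamma_integrand by (auto simp: has_bochner_integral_iff)

lemma has_real_derivative_Gamma_integrand:
  "((\<lambda>\<gamma>. Gamma_integrand \<gamma> t) has_real_derivative ln t * Gamma_integrand \<gamma> t) (at \<gamma>)"
proof (cases "t > 0")
  case True
  have "Gamma_integrand \<gamma>' t = exp ((\<gamma>' - 1) * ln t + - t)" for \<gamma>'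
    using True by (simp add: Gamma_integrand_def powr_def mult_exp_exp mult.commute)
  thus ?thesis
    by (simp only:) (auto intro!: derivative_eq_intros)
qed (simp add: Gamma_integrand_def)

lemma abs_ln_le_powr:
  fixes t e :: real
  assumes "t > 0" "e > 0"
  shows "\<bar>ln t\<bar> \<le> (t powr e + t powr (- e)) / e"
proof -
  have "ln (t powr e) \<le> t powr e" "ln (t powr (- e)) \<le> t powr (- e)"
    using ln_le_minus_one[of "t powr e"] ln_le_minus_one[of "t powr (- e)"] assms by simp_all
  hence "e * ln t \<le> t powr e" "- e * ln t \<le> t powr (- e)"
    using assms by (simp_all add: ln_powr)
  moreover have "t powr e > 0" "t powr (- e) > 0"
    using assms by simp_all
  ultimately have "\<bar>e * ln t\<bar> \<le> t powr e + t powr (- e)"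
    unfolding abs_le_iff by linarith
  thus ?thesis
    using assms by (simp add: pos_le_divide_eq abs_mult mult.commute)
qed

lemma abs_exp_minus_one_le: "\<bar>exp x - 1\<bar> \<le> \<bar>x\<bar> * exp \<bar>x\<bar>"
  for x :: real
proof (cases "x \<ge> 0")
  case True
  have "exp x * (1 - x) \<le> exp x * exp (- x)"
    using exp_ge_add_one_self[of "- x"] by (intro mult_left_mono) auto
  thus ?thesis using True by (simp add: exp_minus algebra_simps)
next
  case False
  hence "\<bar>exp x - 1\<bar> = 1 - exp x" by simp
  also have "\<dots> \<le> \<bar>x\<bar>" using False exp_ge_add_one_self[of x] by linarith
  also have "\<dots> \<le> \<bar>x\<bar> * exp \<bar>x\<bar>" by (simp add: mult_le_cancel_left1)
  finally show ?thesis .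
qed

lemma abs_powr_diff_quotient_le:
  fixes t h d :: real
  assumes t: "t > 0" and d: "d > 0" and h: "\<bar>h\<bar> \<le> d" "h \<noteq> 0"
  shows "\<bar>(t powr h - 1) / h\<bar> \<le> (t powr (2 * d) + 2 + t powr (- 2 * d)) / d"
proof -
  have "\<bar>(t powr h - 1) / h\<bar> = \<bar>exp (h * ln t) - 1\<bar> / \<bar>h\<bar>"
    using t by (simp add: abs_divide powr_def mult.commute)
  also have "\<dots> \<le> \<bar>h * ln t\<bar> * exp \<bar>h * ln t\<bar> / \<bar>h\<bar>"
    by (intro divide_right_mono abs_exp_minus_one_le) auto
  also have "\<dots> = \<bar>ln t\<bar> * exp (\<bar>h\<bar> * \<bar>ln t\<bar>)"
    using h by (simp add: abs_mult)
  also have "\<dots> \<le> \<bar>ln t\<bar> * exp (d * \<bar>ln t\<bar>)"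
    using h by (intro mult_left_mono) (auto intro: mult_right_mono)
  also have "\<dots> \<le> (t powr d + t powr (- d)) / d * (t powr d + t powr (- d))"
  proof (intro mult_mono abs_ln_le_powr t d)
    show "exp (d * \<bar>ln t\<bar>) \<le> t powr d + t powr - d"
      using t by (cases "ln t \<ge> 0") (simp_all add: powr_def)
  qed (use d in auto)
  also have "\<dots> = (t powr (2 * d) + 2 + t powr (- 2 * d)) / d"
    using t by (simp add: field_simps power2_eq_square powr_add[symmetric])
  finally show ?thesis .
qed

lemma abs_Gamma_integrand_diff_quotient_le:
  assumes d: "d > 0" and h: "\<bar>h\<bar> \<le> d" "h \<noteq> 0"
  shows "\<bar>(Gamma_integrand (\<beta> + h) t - Gamma_integrand \<beta> t) / h\<bar>
           \<le> (Gamma_integrand (\<beta> + 2 * d) t + 2 * Gamma_integrand \<beta> t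
               + Gamma_integrand (\<beta> - 2 * d) t) / d"
proof (cases "t > 0")
  case True
  have shift: "Gamma_integrand (\<beta> + c) t = Gamma_integrand \<beta> t * t powr c" for c
    using True by (simp add: Gamma_integrand_def powr_add[symmetric] algebra_simps)
  have "Gamma_integrand (\<beta> + h) t - Gamma_integrand \<beta> t = Gamma_integrand \<beta> t * (t powr h - 1)"
    by (simp add: shift algebra_simps)
  hence "\<bar>(Gamma_integrand (\<beta> + h) t - Gamma_integrand \<beta> t) / h\<bar>
          = Gamma_integrand \<beta> t * \<bar>(t powr h - 1) / h\<bar>"
    by (simp add: abs_mult abs_divide Gamma_integrand_nonneg)
  also have "\<dots> \<le> Gamma_integrand \<beta> t * ((t powr (2 * d) + 2 + t powr (- 2 * d)) / d)"
    by (intro mult_left_mono abs_powr_diff_quotient_le True d h Gamma_integrand_nonneg)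
  also have "\<dots> = (Gamma_integrand (\<beta> + 2 * d) t + 2 * Gamma_integrand \<beta> t
                    + Gamma_integrand (\<beta> - 2 * d) t) / d"
    using shift[of "2 * d"] shift[of "- 2 * d"] by (simp add: field_simps)
  finally show ?thesis .
qed (simp add: Gamma_integrand_def)

lemma integrable_ln_Gamma_integrand:
  assumes "\<beta> > 0"
  shows "integrable lborel (\<lambda>t. ln t * Gamma_integrand \<beta> t)"
proof (rule Bochner_Integration.integrable_bound)
  define e where "e = \<beta> / 2"
  have e: "e > 0" using assms by (simp add: e_def)
  show "integrable lborel (\<lambda>t. (Gamma_integrand (\<beta> + e) t + Gamma_integrand (\<beta> - e) t) / e)"
    using assms e
    by (intro integrable_divide Bochner_Integration.integrable_add integrable_Gamma_integrand)
       (auto simp: e_def)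
  show "AE t in lborel. norm (ln t * Gamma_integrand \<beta> t)
          \<le> norm ((Gamma_integrand (\<beta> + e) t + Gamma_integrand (\<beta> - e) t) / e)"
  proof (intro AE_I2)
    fix t :: real
    show "norm (ln t * Gamma_integrand \<beta> t)
            \<le> norm ((Gamma_integrand (\<beta> + e) t + Gamma_integrand (\<beta> - e) t) / e)"
    proof (cases "t > 0")
      case True
      have "norm (ln t * Gamma_integrand \<beta> t) = \<bar>ln t\<bar> * Gamma_integrand \<beta> t"
        by (simp add: abs_mult Gamma_integrand_nonneg)
      also have "\<dots> \<le> (t powr e + t powr (- e)) / e * Gamma_integrand \<beta> t"
        by (intro mult_right_mono abs_ln_le_powr True e Gamma_integrand_nonneg)
      also have "\<dots> = (Gamma_integrand (\<beta> + e) t + Gamma_integrand (\<beta> - e) t) / e"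
        using True by (simp add: Gamma_integrand_def field_simps powr_add[symmetric])
      also have "\<dots> \<le> norm ((Gamma_integrand (\<beta> + e) t + Gamma_integrand (\<beta> - e) t) / e)"
        unfolding real_norm_def by (rule abs_ge_self)
      finally show ?thesis .
    qed (simp add: Gamma_integrand_def)
  qed
qed simp

text \<open>Differentiation of the Gamma integral under the integral sign.\<close>
lemma integral_ln_Gamma_integrand:
  assumes "\<beta> > 0"
  shows "(\<integral>t. ln t * Gamma_integrand \<beta> t \<partial>lborel) = Gamma \<beta> * Digamma \<beta>"
proof -
  define d where "d = \<beta> / 4"
  have d: "d > 0" using assms by (simp add: d_def)
  define q where "q = (\<lambda>h t. (Gamma_integrand (\<beta> + h) t - Gamma_integrand \<beta> t) / h)"
  define L where "L = (\<integral>t. ln t * Gamma_integrand \<beta> t \<partial>lborel)"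
  have small: "\<forall>\<^sub>F h in at 0. h \<noteq> 0 \<and> \<bar>h\<bar> < d"
    using d by (auto simp: eventually_at intro!: exI[of _ d])
  have "((\<lambda>h. integral\<^sup>L lborel (q h)) \<longlongrightarrow> L) (at 0)"
    unfolding L_def
  proof (rule integral_dominated_convergence_at)
    show "integrable lborel (\<lambda>t. (Gamma_integrand (\<beta> + 2 * d) t + 2 * Gamma_integrand \<beta> t
                                   + Gamma_integrand (\<beta> - 2 * d) t) / d)"
      using assms d
      by (intro integrable_divide Bochner_Integration.integrable_add integrable_mult_right
            integrable_Gamma_integrand) (auto simp: d_def)
    show "AE t in lborel. ((\<lambda>h. q h t) \<longlongrightarrow> ln t * Gamma_integrand \<beta> t) (at 0)"
      using has_real_derivative_Gamma_integrand by (simp add: q_def DERIV_def)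
    show "\<forall>\<^sub>F h in at 0. AE t in lborel. norm (q h t)
            \<le> (Gamma_integrand (\<beta> + 2 * d) t + 2 * Gamma_integrand \<beta> t
               + Gamma_integrand (\<beta> - 2 * d) t) / d"
      using small
    proof eventually_elim
      case (elim h)
      show ?case
        unfolding q_def real_norm_def
        by (intro AE_I2 abs_Gamma_integrand_diff_quotient_le d) (use elim in auto)
    qed
  qed (auto simp: q_def)
  moreover have "\<forall>\<^sub>F h in at 0. integral\<^sup>L lborel (q h) = (Gamma (\<beta> + h) - Gamma \<beta>) / h"
    using small
  proof eventually_elim
    case (elim h)
    hence "\<beta> + h > 0" using assms by (auto simp: d_def)
    thus ?case
      using assms by (simp add: q_def integral_Gamma_integrand integrable_Gamma_integrand)
  qed
  ultimately have "(Gamma has_real_derivative L) (at \<beta>)"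
    unfolding DERIV_def using tendsto_cong by fastforce
  moreover have "(Gamma has_real_derivative Gamma \<beta> * Digamma \<beta>) (at \<beta>)"
    using assms by (intro has_field_derivative_Gamma) (auto elim!: nonpos_Ints_cases)
  ultimately show ?thesis
    unfolding L_def by (rule DERIV_unique)
qed

lemma gamma_dens_eq_Gamma_integrand: "gamma_dens \<alpha> = (\<lambda>t. Gamma_integrand \<alpha> t / Gamma \<alpha>)"
  by (simp add: fun_eq_iff gamma_dens_def Gamma_integrand_def)

lemma gamma_dens_measurable [measurable]: "gamma_dens \<alpha> \<in> borel_measurable borel"
  unfolding gamma_dens_def by measurable

lemma gamma_dens_nonpos: "t \<le> 0 \<Longrightarrow> gamma_dens \<alpha> t = 0"
  by (simp add: gamma_dens_def)

lemma gamma_dens_nonneg: "\<alpha> > 0 \<Longrightarrow> gamma_dens \<alpha> t \<ge> 0"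
  by (simp add: gamma_dens_eq_Gamma_integrand Gamma_integrand_nonneg)

lemma gamma_dens_pos: "\<alpha> > 0 \<Longrightarrow> t > 0 \<Longrightarrow> gamma_dens \<alpha> t > 0"
  by (simp add: gamma_dens_def)

lemma integrable_gamma_dens: "\<alpha> > 0 \<Longrightarrow> integrable lborel (gamma_dens \<alpha>)"
  unfolding gamma_dens_eq_Gamma_integrand by (intro integrable_divide integrable_Gamma_integrand)

lemma integral_gamma_dens: "\<alpha> > 0 \<Longrightarrow> integral\<^sup>L lborel (gamma_dens \<alpha>) = 1"
  by (simp add: gamma_dens_eq_Gamma_integrand integral_Gamma_integrand
                Gamma_real_pos[THEN less_imp_neq, symmetric])

lemma integrable_ln_gamma_dens: "\<alpha> > 0 \<Longrightarrow> integrable lborel (\<lambda>t. ln t * gamma_dens \<alpha> t)"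
  using integrable_divide[OF integrable_ln_Gamma_integrand[of \<alpha>], of "Gamma \<alpha>"]
  by (simp add: gamma_dens_eq_Gamma_integrand)

lemma integral_ln_gamma_dens: "\<alpha> > 0 \<Longrightarrow> (\<integral>t. ln t * gamma_dens \<alpha> t \<partial>lborel) = Digamma \<alpha>"
  by (simp add: gamma_dens_eq_Gamma_integrand integral_ln_Gamma_integrand
                Gamma_real_pos[THEN less_imp_neq, symmetric])

lemma lebesgue_integral_Beta:
  fixes a b :: real
  assumes "a > 0" "b > 0"
  shows "(\<integral>u. indicator {0..1} u * (u powr (a - 1) * (1 - u) powr (b - 1)) \<partial>lborel) = Beta a b"
proof -
  have "(LINT u:{0..1}|lborel. u powr (a - 1) * (1 - u) powr (b - 1)) =
        integral {0..1} (\<lambda>u. u powr (a - 1) * (1 - u) powr (b - 1))"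
    by (rule set_borel_integral_eq_integral(2)[OF integrable_Beta[OF assms]])
  also have "\<dots> = Beta a b"
    by (rule integral_unique[OF has_integral_Beta_real[OF assms]])
  finally show ?thesis by (simp add: set_lebesgue_integral_def)
qed

text \<open>The substitution \<open>x = w u\<close> turns the convolution into a Beta integral.\<close>
lemma gamma_dens_convolution:
  fixes \<alpha> \<beta> w :: real
  assumes \<alpha>: "\<alpha> > 0" and \<beta>: "\<beta> > 0"
  shows "(\<integral>x. gamma_dens \<alpha> x * gamma_dens \<beta> (w - x) \<partial>lborel) = gamma_dens (\<alpha> + \<beta>) w"
proof (cases "w > 0")
  case False
  hence "(\<lambda>x. gamma_dens \<alpha> x * gamma_dens \<beta> (w - x)) = (\<lambda>_. 0)"
    by (auto simp: fun_eq_iff gamma_dens_def)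
  thus ?thesis using False by (simp add: gamma_dens_nonpos)
next
  case w: True
  define C where "C = w powr (\<alpha> + \<beta> - 2) * exp (- w) / (Gamma \<alpha> * Gamma \<beta>)"
  have integrand: "gamma_dens \<alpha> (w * u) * gamma_dens \<beta> (w - w * u) =
            C * (indicator {0..1} u * (u powr (\<alpha> - 1) * (1 - u) powr (\<beta> - 1)))" for u
  proof (cases "0 < u \<and> u < 1")
    case True
    have "gamma_dens \<alpha> (w * u) * gamma_dens \<beta> (w * (1 - u)) =
          (w powr (\<alpha> - 1) * w powr (\<beta> - 1)) * (exp (- (w * u)) * exp (- (w * (1 - u))))
            * (u powr (\<alpha> - 1) * (1 - u) powr (\<beta> - 1)) / (Gamma \<alpha> * Gamma \<beta>)"
      using True w by (simp add: gamma_dens_def powr_mult)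
    also have "\<dots> = C * (indicator {0..1} u * (u powr (\<alpha> - 1) * (1 - u) powr (\<beta> - 1)))"
      using True w by (simp add: C_def powr_add[symmetric] mult_exp_exp indicator_def algebra_simps)
    finally show ?thesis by (simp add: right_diff_distrib)
  next
    case False
    hence "w * u \<le> 0 \<or> w - w * u \<le> 0 \<or> u = 0 \<or> u = 1"
      using w by (auto simp: mult_le_0_iff not_less algebra_simps)
    thus ?thesis
      using False by (auto simp: gamma_dens_nonpos indicator_def)
  qed
  have "(\<integral>x. gamma_dens \<alpha> x * gamma_dens \<beta> (w - x) \<partial>lborel) =
        \<bar>w\<bar> *\<^sub>R (\<integral>u. gamma_dens \<alpha> (0 + w * u) * gamma_dens \<beta> (w - (0 + w * u)) \<partial>lborel)"
    using w by (intro lborel_integral_real_affine) simp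
  also have "\<dots> = w * C * Beta \<alpha> \<beta>"
    using w by (simp add: integrand lebesgue_integral_Beta[OF \<alpha> \<beta>])
  also have "\<dots> = gamma_dens (\<alpha> + \<beta>) w"
    using w \<alpha> \<beta>
    by (simp add: C_def Beta_def gamma_dens_def powr_mult_base Gamma_real_pos[THEN less_imp_neq, symmetric]
                  field_simps)
  finally show ?thesis .
qed

lemma (in pair_sigma_finite) integrable_product_mult:
  fixes a :: "'a \<Rightarrow> real" and b :: "'b \<Rightarrow> real"
  assumes a: "integrable M1 a" and b: "integrable M2 b"
  shows "integrable (M1 \<Otimes>\<^sub>M M2) (\<lambda>(x, y). a x * b y)"
proof (rule Fubini_integrable)
  note [measurable] = borel_measurable_integrable[OF a] borel_measurable_integrable[OF b]
  show "(\<lambda>(x, y). a x * b y) \<in> borel_measurable (M1 \<Otimes>\<^sub>M M2)" by measurable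
  have "integrable M1 (\<lambda>x. \<bar>a x\<bar> * (\<integral>y. \<bar>b y\<bar> \<partial>M2))"
    using a by (intro integrable_mult_left integrable_abs)
  thus "integrable M1 (\<lambda>x. \<integral>y. norm ((\<lambda>(x, y). a x * b y) (x, y)) \<partial>M2)"
    by (simp add: abs_mult)
  show "AE x in M1. integrable M2 (\<lambda>y. (\<lambda>(x, y). a x * b y) (x, y))"
    using b by auto
qed

lemma (in pair_sigma_finite) integral_product_mult:
  fixes a :: "'a \<Rightarrow> real" and b :: "'b \<Rightarrow> real"
  assumes "integrable M1 a" and "integrable M2 b"
  shows "(\<integral>(x, y). a x * b y \<partial>(M1 \<Otimes>\<^sub>M M2)) = integral\<^sup>L M1 a * integral\<^sup>L M2 b"
  using integral_fst[OF integrable_product_mult[OF assms]] by simp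

lemma
  fixes f :: "real \<Rightarrow> real \<Rightarrow> real"
  assumes int: "integrable (lborel \<Otimes>\<^sub>M lborel) (\<lambda>(x, y). f x y)"
  shows integrable_lborel_pair_shear: "integrable (lborel \<Otimes>\<^sub>M lborel) (\<lambda>(x, w). f x (w - x))"
    and integral_lborel_pair_shear:
      "(\<integral>(x, w). f x (w - x) \<partial>(lborel \<Otimes>\<^sub>M lborel)) = (\<integral>(x, y). f x y \<partial>(lborel \<Otimes>\<^sub>M lborel))"
proof -
  note [measurable] = borel_measurable_integrable[OF int]
  have shear_measurable: "(\<lambda>(x, w). f x (w - x)) \<in> borel_measurable (lborel \<Otimes>\<^sub>M lborel)"
    by measurable
  have translate: "(\<integral>\<^sup>+ w. ennreal \<bar>f x (w - x)\<bar> \<partial>lborel) = (\<integral>\<^sup>+ y. ennreal \<bar>f x y\<bar> \<partial>lborel)"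
    for x
  proof -
    have "(\<lambda>w. ennreal \<bar>f x (w - x)\<bar>) \<in> borel_measurable borel" by measurable
    from nn_integral_real_affine[OF this, of 1 x] show ?thesis by simp
  qed
  have "(\<integral>\<^sup>+ p. ennreal (norm ((\<lambda>(x, w). f x (w - x)) p)) \<partial>(lborel \<Otimes>\<^sub>M lborel)) =
        (\<integral>\<^sup>+ p. ennreal (norm ((\<lambda>(x, y). f x y) p)) \<partial>(lborel \<Otimes>\<^sub>M lborel))"
    by (simp add: lborel.nn_integral_fst[symmetric] shear_measurable translate)
  thus int_shear: "integrable (lborel \<Otimes>\<^sub>M lborel) (\<lambda>(x, w). f x (w - x))"
    using int shear_measurable unfolding integrable_iff_bounded by metis
  have "(\<integral>(x, w). f x (w - x) \<partial>(lborel \<Otimes>\<^sub>M lborel)) = (\<integral>x. \<integral>w. f x (w - x) \<partial>lborel \<partial>lborel)"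
    using lborel_pair.integral_fst[OF int_shear] by simp
  also have "\<dots> = (\<integral>x. \<integral>y. f x y \<partial>lborel \<partial>lborel)"
    using lborel_integral_real_affine[of 1 "\<lambda>w. f x (w - x)" x for x] by simp
  also have "\<dots> = (\<integral>(x, y). f x y \<partial>(lborel \<Otimes>\<^sub>M lborel))"
    using lborel_pair.integral_fst[OF int] by simp
  finally show "(\<integral>(x, w). f x (w - x) \<partial>(lborel \<Otimes>\<^sub>M lborel)) = (\<integral>(x, y). f x y \<partial>(lborel \<Otimes>\<^sub>M lborel))" .
qed

lemma integrable_gamma_dens_product_ln_bounded:
  fixes h :: "real \<Rightarrow> real \<Rightarrow> real"
  assumes \<alpha>: "\<alpha> > 0" and \<beta>: "\<beta> > 0"
    and [measurable]: "(\<lambda>(x, y). h x y) \<in> borel_measurable (lborel \<Otimes>\<^sub>M lborel)"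
    and bound: "\<And>x y. x > 0 \<Longrightarrow> y > 0 \<Longrightarrow> \<bar>h x y\<bar> \<le> \<bar>ln x\<bar> + \<bar>ln y\<bar> + 1"
  shows "integrable (lborel \<Otimes>\<^sub>M lborel) (\<lambda>(x, y). h x y * (gamma_dens \<alpha> x * gamma_dens \<beta> y))"
proof (rule Bochner_Integration.integrable_bound)
  let ?g = "gamma_dens \<alpha>" and ?g' = "gamma_dens \<beta>"
  have abs_ln: "integrable lborel (\<lambda>x. \<bar>ln x\<bar> * gamma_dens \<gamma> x)" if "\<gamma> > 0" for \<gamma>
    using integrable_abs[OF integrable_ln_gamma_dens[OF that]]
    by (simp add: abs_mult abs_of_nonneg gamma_dens_nonneg[OF that])
  note product = lborel_pair.integrable_product_mult[unfolded case_prod_beta]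
  show "integrable (lborel \<Otimes>\<^sub>M lborel) (\<lambda>p. \<bar>ln (fst p)\<bar> * ?g (fst p) * ?g' (snd p)
          + ?g (fst p) * (\<bar>ln (snd p)\<bar> * ?g' (snd p)) + ?g (fst p) * ?g' (snd p))"
    by (intro Bochner_Integration.integrable_add product abs_ln integrable_gamma_dens \<alpha> \<beta>)
  show "AE p in lborel \<Otimes>\<^sub>M lborel. norm ((\<lambda>(x, y). h x y * (?g x * ?g' y)) p)
          \<le> norm (\<bar>ln (fst p)\<bar> * ?g (fst p) * ?g' (snd p)
                  + ?g (fst p) * (\<bar>ln (snd p)\<bar> * ?g' (snd p)) + ?g (fst p) * ?g' (snd p))"
  proof (intro AE_I2, unfold split_paired_all fst_conv snd_conv case_prod_conv)
    fix x y :: real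
    have nonneg: "?g x \<ge> 0" "?g' y \<ge> 0"
      using \<alpha> \<beta> by (simp_all add: gamma_dens_nonneg)
    show "norm (h x y * (?g x * ?g' y))
            \<le> norm (\<bar>ln x\<bar> * ?g x * ?g' y + ?g x * (\<bar>ln y\<bar> * ?g' y) + ?g x * ?g' y)"
    proof (cases "x > 0 \<and> y > 0")
      case True
      have "\<bar>h x y\<bar> * (?g x * ?g' y) \<le> (\<bar>ln x\<bar> + \<bar>ln y\<bar> + 1) * (?g x * ?g' y)"
        using True bound nonneg by (intro mult_right_mono) auto
      thus ?thesis
        using nonneg by (simp add: abs_mult algebra_simps)
    next
      case False
      hence "?g x = 0 \<or> ?g' y = 0" by (auto simp: gamma_dens_nonpos)
      thus ?thesis by auto
    qed
  qed
  show "(\<lambda>(x, y). h x y * (?g x * ?g' y)) \<in> borel_measurable (lborel \<Otimes>\<^sub>M lborel)"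
    by measurable
qed

lemma ln_max_less_ln_add: "x > 0 \<Longrightarrow> y > 0 \<Longrightarrow> ln (max x y) < ln (x + y)"
  for x y :: real
  by (simp add: max_def)

lemma ln_add_le_ln_max:
  fixes x y :: real
  assumes "x > 0" "y > 0"
  shows "ln (x + y) \<le> ln 2 + ln (max x y)"
proof -
  have "ln (x + y) \<le> ln (2 * max x y)" using assms by (simp add: max_def)
  also have "\<dots> = ln 2 + ln (max x y)" using assms by (simp add: ln_mult max_def)
  finally show ?thesis .
qed

lemma ln_add_less_ln_max:
  fixes x y :: real
  assumes "0 < x" "x < y"
  shows "ln (x + y) < ln 2 + ln (max x y)"
proof -
  have "ln (x + y) < ln (2 * y)" using assms by simp
  thus ?thesis using assms by (simp add: ln_mult max_def)
qed

lemma abs_ln_add_le: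
  fixes x y :: real
  assumes "x > 0" "y > 0"
  shows "\<bar>ln (x + y)\<bar> \<le> \<bar>ln x\<bar> + \<bar>ln y\<bar> + 1"
proof -
  have "ln x \<le> ln (max x y)" "ln (max x y) \<le> \<bar>ln x\<bar> + \<bar>ln y\<bar>"
    using assms by (auto simp: max_def)
  thus ?thesis
    using ln_max_less_ln_add[OF assms] ln_add_le_ln_max[OF assms] ln_2_less_1 abs_ge_minus_self[of "ln x"]
    unfolding abs_le_iff by linarith
qed

lemma
  assumes "\<alpha> > 0" "\<beta> > 0"
  shows integrable_ln_max_gamma_dens:
      "integrable (lborel \<Otimes>\<^sub>M lborel) (\<lambda>(x, y). ln (max x y) * (gamma_dens \<alpha> x * gamma_dens \<beta> y))"
    and integrable_ln_add_gamma_dens: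
      "integrable (lborel \<Otimes>\<^sub>M lborel) (\<lambda>(x, y). ln (x + y) * (gamma_dens \<alpha> x * gamma_dens \<beta> y))"
  using integrable_gamma_dens_product_ln_bounded[OF assms, of "\<lambda>x y. ln (max x y)"]
    integrable_gamma_dens_product_ln_bounded[OF assms, of "\<lambda>x y. ln (x + y)"]
  by (auto simp: max_def abs_ln_add_le)

text \<open>After the shear \<open>w = x + y\<close> the inner integral is the convolution of the two densities.\<close>
lemma integral_ln_add_gamma_dens:
  assumes \<alpha>: "\<alpha> > 0" and \<beta>: "\<beta> > 0"
  shows "(\<integral>(x, y). ln (x + y) * (gamma_dens \<alpha> x * gamma_dens \<beta> y) \<partial>(lborel \<Otimes>\<^sub>M lborel))
           = Digamma (\<alpha> + \<beta>)"
proof -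
  define f where "f = (\<lambda>x y. ln (x + y) * (gamma_dens \<alpha> x * gamma_dens \<beta> y))"
  have f: "integrable (lborel \<Otimes>\<^sub>M lborel) (\<lambda>(x, y). f x y)"
    unfolding f_def by (rule integrable_ln_add_gamma_dens[OF \<alpha> \<beta>])
  have "(\<integral>(x, y). f x y \<partial>(lborel \<Otimes>\<^sub>M lborel)) = (\<integral>(x, w). f x (w - x) \<partial>(lborel \<Otimes>\<^sub>M lborel))"
    by (rule integral_lborel_pair_shear[OF f, symmetric])
  also have "\<dots> = (\<integral>w. \<integral>x. f x (w - x) \<partial>lborel \<partial>lborel)"
    by (rule lborel_pair.integral_snd[OF integrable_lborel_pair_shear[OF f], symmetric])
  also have "\<dots> = (\<integral>w. ln w * gamma_dens (\<alpha> + \<beta>) w \<partial>lborel)"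
    by (simp add: f_def gamma_dens_convolution[OF \<alpha> \<beta>])
  also have "\<dots> = Digamma (\<alpha> + \<beta>)"
    using \<alpha> \<beta> by (intro integral_ln_gamma_dens) simp
  finally show ?thesis by (simp add: f_def)
qed

lemma integral_less_of_less_on_set:
  fixes f g :: "'a \<Rightarrow> real"
  assumes f: "integrable M f" and g: "integrable M g"
    and le: "\<And>x. x \<in> space M \<Longrightarrow> f x \<le> g x"
    and A: "A \<in> sets M" "emeasure M A \<noteq> 0" and less: "\<And>x. x \<in> A \<Longrightarrow> f x < g x"
  shows "integral\<^sup>L M f < integral\<^sup>L M g"
proof -
  have "integral\<^sup>L M (\<lambda>x. g x - f x) \<noteq> 0"
  proof
    assume "integral\<^sup>L M (\<lambda>x. g x - f x) = 0"
    hence "AE x in M. g x - f x = 0"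
      using integral_nonneg_eq_0_iff_AE[of M "\<lambda>x. g x - f x"] f g le by auto
    hence "AE x in M. x \<notin> A"
      by eventually_elim (use less in force)
    with A show False
      using AE_iff_measurable[OF A(1), where P="\<lambda>x. x \<notin> A"] sets.sets_into_space[OF A(1)]
      by (auto simp: Int_absorb1)
  qed
  moreover have "integral\<^sup>L M (\<lambda>x. g x - f x) \<ge> 0"
    using le by (intro integral_nonneg_AE) auto
  ultimately show ?thesis
    using f g by simp
qed

lemma integral_gamma_dens_product_strict_mono:
  fixes h h' :: "real \<Rightarrow> real \<Rightarrow> real"
  assumes \<alpha>: "\<alpha> > 0" and \<beta>: "\<beta> > 0"
    and int: "integrable (lborel \<Otimes>\<^sub>M lborel) (\<lambda>(x, y). h x y * (gamma_dens \<alpha> x * gamma_dens \<beta> y))"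
    and int': "integrable (lborel \<Otimes>\<^sub>M lborel) (\<lambda>(x, y). h' x y * (gamma_dens \<alpha> x * gamma_dens \<beta> y))"
    and le: "\<And>x y. x > 0 \<Longrightarrow> y > 0 \<Longrightarrow> h x y \<le> h' x y"
    and less: "\<And>x y. 0 < x \<Longrightarrow> x < y \<Longrightarrow> h x y < h' x y"
  shows "(\<integral>(x, y). h x y * (gamma_dens \<alpha> x * gamma_dens \<beta> y) \<partial>(lborel \<Otimes>\<^sub>M lborel))
       < (\<integral>(x, y). h' x y * (gamma_dens \<alpha> x * gamma_dens \<beta> y) \<partial>(lborel \<Otimes>\<^sub>M lborel))"
proof (rule integral_less_of_less_on_set[OF int int'])
  let ?A = "{1::real<..<2} \<times> {3::real<..<4}"
  let ?gg = "\<lambda>x y. gamma_dens \<alpha> x * gamma_dens \<beta> y"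
  show "?A \<in> sets (lborel \<Otimes>\<^sub>M lborel)" "emeasure (lborel \<Otimes>\<^sub>M lborel) ?A \<noteq> 0"
    by (simp_all add: lborel.emeasure_pair_measure_Times)
  show "(\<lambda>(x, y). h x y * ?gg x y) p \<le> (\<lambda>(x, y). h' x y * ?gg x y) p" for p
  proof (cases p)
    case (Pair x y)
    show ?thesis
    proof (cases "x > 0 \<and> y > 0")
      case True
      thus ?thesis
        using Pair le[of x y] \<alpha> \<beta> by (simp add: mult_right_mono gamma_dens_nonneg)
    qed (auto simp: Pair gamma_dens_nonpos)
  qed
  show "(\<lambda>(x, y). h x y * ?gg x y) p < (\<lambda>(x, y). h' x y * ?gg x y) p" if p: "p \<in> ?A" for p
  proof -
    obtain x y where xy: "p = (x, y)" "1 < x" "x < 2" "3 < y" "y < 4"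
      using p by (cases p) auto
    have "h x y < h' x y"
      using xy by (intro less) auto
    moreover have "?gg x y > 0"
      using xy \<alpha> \<beta> by (simp add: gamma_dens_pos)
    ultimately show ?thesis
      using xy by (simp add: mult_strict_right_mono)
  qed
qed

lemma integral_ln_max_gamma_dens_bounds:
  assumes \<alpha>: "\<alpha> > 0" and \<beta>: "\<beta> > 0"
  defines "I \<equiv> (\<integral>(x, y). ln (max x y) * (gamma_dens \<alpha> x * gamma_dens \<beta> y) \<partial>(lborel \<Otimes>\<^sub>M lborel))"
  shows "Digamma (\<alpha> + \<beta>) - ln 2 < I" and "I < Digamma (\<alpha> + \<beta>)"
proof -
  let ?P = "lborel \<Otimes>\<^sub>M lborel :: (real \<times> real) measure"
  let ?gg = "\<lambda>x y. gamma_dens \<alpha> x * gamma_dens \<beta> y"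
  note int_max = integrable_ln_max_gamma_dens[OF \<alpha> \<beta>]
  note int_add = integrable_ln_add_gamma_dens[OF \<alpha> \<beta>]
  note add = integral_ln_add_gamma_dens[OF \<alpha> \<beta>]
  have int_gg: "integrable ?P (\<lambda>(x, y). ?gg x y)"
    and "(\<integral>(x, y). ?gg x y \<partial>?P) = 1"
    using lborel_pair.integrable_product_mult[OF integrable_gamma_dens integrable_gamma_dens, OF \<alpha> \<beta>]
      lborel_pair.integral_product_mult[OF integrable_gamma_dens integrable_gamma_dens, OF \<alpha> \<beta>]
    by (simp_all add: integral_gamma_dens \<alpha> \<beta>)
  hence int_shifted: "integrable ?P (\<lambda>(x, y). (ln (x + y) - ln 2) * ?gg x y)"
    and shifted: "(\<integral>(x, y). (ln (x + y) - ln 2) * ?gg x y \<partial>?P) = Digamma (\<alpha> + \<beta>) - ln 2"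
    using int_add add by (simp_all add: split_beta' left_diff_distrib)
  have "(\<integral>(x, y). (ln (x + y) - ln 2) * ?gg x y \<partial>?P) < I"
    unfolding I_def
  proof (rule integral_gamma_dens_product_strict_mono[OF \<alpha> \<beta> int_shifted int_max])
    show "ln (x + y) - ln 2 \<le> ln (max x y)" if "x > 0" "y > 0" for x y :: real
      using ln_add_le_ln_max[OF that] by simp
    show "ln (x + y) - ln 2 < ln (max x y)" if "0 < x" "x < y" for x y :: real
      using ln_add_less_ln_max[OF that] by simp
  qed
  thus "Digamma (\<alpha> + \<beta>) - ln 2 < I"
    by (simp only: shifted)
  have "I < (\<integral>(x, y). ln (x + y) * ?gg x y \<partial>?P)"
    unfolding I_def
  proof (rule integral_gamma_dens_product_strict_mono[OF \<alpha> \<beta> int_max int_add])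
    show "ln (max x y) \<le> ln (x + y)" if "x > 0" "y > 0" for x y :: real
      using ln_max_less_ln_add[OF that] by simp
    show "ln (max x y) < ln (x + y)" if "0 < x" "x < y" for x y :: real
      using ln_max_less_ln_add[of x y] that by simp
  qed
  thus "I < Digamma (\<alpha> + \<beta>)"
    by (simp only: add)
qed

lemma AE_lborel_pair_fst_neq_snd: "AE p in lborel \<Otimes>\<^sub>M lborel. fst p \<noteq> (snd p :: real)"
proof (rule lborel_pair.AE_pair_measure)
  show "{p \<in> space (lborel \<Otimes>\<^sub>M lborel). fst p \<noteq> snd p} \<in> sets (lborel \<Otimes>\<^sub>M lborel)"
    by measurable
  show "AE x in lborel. AE y in lborel. fst (x, y) \<noteq> snd (x, y)"
    using AE_lborel_singleton by (auto simp: eq_commute)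
qed

text \<open>Fubini, with the distribution function written as an integral over \<open>y \<le> x\<close>.\<close>
lemma c2_eq_integral_lower_triangle:
  assumes \<alpha>: "\<alpha> > 0"
  shows "c2 \<alpha> = 2 * (\<integral>(x, y). (if y \<le> x then ln x else 0) * (gamma_dens \<alpha> x * gamma_dens \<alpha> y)
                        \<partial>(lborel \<Otimes>\<^sub>M lborel))"
proof -
  let ?g = "gamma_dens \<alpha>"
  define H where "H = (\<lambda>x y. (if y \<le> x then ln x else 0) * (?g x * ?g y))"
  have "integrable (lborel \<Otimes>\<^sub>M lborel) (\<lambda>(x, y). H x y)"
    unfolding H_def by (rule integrable_gamma_dens_product_ln_bounded[OF \<alpha> \<alpha>]) auto
  note Fubini = lborel_pair.integral_fst[OF this]
  have "indicator {0<..} x *\<^sub>R (ln x * gamma_cdf \<alpha> x * ?g x) = (\<integral>y. H x y \<partial>lborel)" for x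
  proof -
    have "indicator {0<..} x *\<^sub>R (ln x * gamma_cdf \<alpha> x * ?g x) = (ln x * ?g x) * gamma_cdf \<alpha> x"
      by (simp add: gamma_dens_def indicator_def)
    also have "\<dots> = (ln x * ?g x) * (\<integral>y. (if y \<le> x then ?g y else 0) \<partial>lborel)"
      unfolding gamma_cdf_def set_lebesgue_integral_def
      by (intro arg_cong[where f="\<lambda>u. _ * u"] Bochner_Integration.integral_cong)
         (auto simp: indicator_def)
    also have "\<dots> = (\<integral>y. H x y \<partial>lborel)"
      unfolding H_def integral_mult_right_zero[symmetric]
      by (rule Bochner_Integration.integral_cong) auto
    finally show ?thesis .
  qed
  hence "c2 \<alpha> = 2 * (\<integral>x. \<integral>y. H x y \<partial>lborel \<partial>lborel)"
    by (simp add: c2_def set_lebesgue_integral_def)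
  also have "\<dots> = 2 * (\<integral>(x, y). H x y \<partial>(lborel \<Otimes>\<^sub>M lborel))"
    by (simp only: Fubini)
  finally show ?thesis
    by (simp only: H_def)
qed

lemma integral_ln_max_eq_twice_lower_triangle:
  assumes \<alpha>: "\<alpha> > 0"
  shows "(\<integral>(x, y). ln (max x y) * (gamma_dens \<alpha> x * gamma_dens \<alpha> y) \<partial>(lborel \<Otimes>\<^sub>M lborel))
         = 2 * (\<integral>(x, y). (if y \<le> x then ln x else 0) * (gamma_dens \<alpha> x * gamma_dens \<alpha> y)
                  \<partial>(lborel \<Otimes>\<^sub>M lborel))"
proof -
  let ?P = "lborel \<Otimes>\<^sub>M lborel :: (real \<times> real) measure"
  let ?g = "gamma_dens \<alpha>"
  define lower where "lower = (\<lambda>(x, y). (if y \<le> x then ln x else 0) * (?g x * ?g y))"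
  define lower' where "lower' = (\<lambda>(x, y). (if y < x then ln x else 0) * (?g x * ?g y))"
  define upper where "upper = (\<lambda>(x, y). (if x < y then ln y else 0) * (?g x * ?g y))"
  have int_lower: "integrable ?P lower"
    unfolding lower_def by (rule integrable_gamma_dens_product_ln_bounded[OF \<alpha> \<alpha>]) auto
  have int_lower': "integrable ?P lower'"
    unfolding lower'_def by (rule integrable_gamma_dens_product_ln_bounded[OF \<alpha> \<alpha>]) auto
  have int_upper: "integrable ?P upper"
    unfolding upper_def by (rule integrable_gamma_dens_product_ln_bounded[OF \<alpha> \<alpha>]) auto
  have "integral\<^sup>L ?P upper = (\<integral>(x, y). lower' (y, x) \<partial>?P)"
    by (intro Bochner_Integration.integral_cong) (auto simp: lower'_def upper_def)
  also have "\<dots> = integral\<^sup>L ?P lower'"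
    using int_lower' by (intro lborel_pair.integral_product_swap) auto
  also have "\<dots> = integral\<^sup>L ?P lower"
  proof (rule integral_cong_AE)
    show "lower' \<in> borel_measurable ?P" "lower \<in> borel_measurable ?P"
      using int_lower int_lower' by auto
    show "AE p in ?P. lower' p = lower p"
      using AE_lborel_pair_fst_neq_snd
      by eventually_elim (auto simp: lower_def lower'_def)
  qed
  finally have upper_eq: "integral\<^sup>L ?P upper = integral\<^sup>L ?P lower" .
  have "(\<lambda>(x, y). ln (max x y) * (?g x * ?g y)) = (\<lambda>p. lower p + upper p)"
    by (auto simp: fun_eq_iff lower_def upper_def max_def)
  hence "(\<integral>(x, y). ln (max x y) * (?g x * ?g y) \<partial>?P) = integral\<^sup>L ?P (\<lambda>p. lower p + upper p)"
    by simp
  also have "\<dots> = integral\<^sup>L ?P lower + integral\<^sup>L ?P upper"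
    by (rule Bochner_Integration.integral_add[OF int_lower int_upper])
  finally show ?thesis
    by (simp add: upper_eq lower_def)
qed

theorem lemma2p1:
  fixes \<alpha> :: real
  assumes "\<alpha> > 0"
  shows "Digamma \<alpha> < Digamma (2 * \<alpha>) - ln 2
       \<and> Digamma (2 * \<alpha>) - ln 2 < c2 \<alpha>
       \<and> c2 \<alpha> < Digamma (2 * \<alpha>)"
proof -
  have "c2 \<alpha> = (\<integral>(x, y). ln (max x y) * (gamma_dens \<alpha> x * gamma_dens \<alpha> y) \<partial>(lborel \<Otimes>\<^sub>M lborel))"
    using c2_eq_integral_lower_triangle[OF assms] integral_ln_max_eq_twice_lower_triangle[OF assms]
    by linarith
  thus ?thesis
    using Digamma_less_Digamma_double_minus_ln2[OF assms] integral_ln_max_gamma_dens_bounds[OF assms assms]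
    unfolding mult_2 by linarith
qed

end
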